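(* Let $d\ge1$, $0<c\le\infty$, $X=(0,c)$, $X_{\mathrm{SYM}}=(-c,0)\cup(0,c)$, $\mathbb{X}=(X_{\mathrm{SYM}})^d$. For $i=1,\dots,d$ let $w_i\in C^2(X)$ be strictly positive, $p_i\in C^2(X)$ real-valued and nonvanishing, $q_i\in C^1(X)$ real-valued, $a_i\ge0$ constants, $\mu_i(dx)=w_i(x)dx$ on $X$, $\delta_i=p_i\frac{d}{dx}+q_i$, $\delta_i^*=-p_i\frac{d}{dx}+q_i-p_i\frac{w_i'}{w_i}-p_i'$, $L_i=a_i+\delta_i^*\delta_i$. Assume for each $i$ there is an orthonormal basis $\{\varphi^{(i)}_k:k\in\mathbb{N}\}$ of $L^2(X,\mu_i)$ with $\varphi^{(i)}_k\in C^\infty(X)$, $L_i\varphi^{(i)}_k=\lambda^{(i)}_k\varphi^{(i)}_k$, $\lambda^{(i)}_0<\lambda^{(i)}_1<\dots\to\infty$, $\delta_i\varphi^{(i)}_k\in L^2(X,\mu_i)$ and $\langle\delta_i\varphi^{(i)}_k,\delta_i\varphi^{(i)}_m\rangle_{\mu_i}=\langle\delta_i^*\delta_i\varphi^{(i)}_k,\varphi^{(i)}_m\rangle_{\mu_i}$ for all $k,m$; assume moreover $a_i=\lambda^{(i)}_0$ for every $i$. Extend $w_i,p_i,\varphi^{(i)}_k$ evenly and $q_i$ oddly to $X_{\mathrm{SYM}}$, define $\Phi^{(i)}_n=\frac1{\sqrt2}\varphi^{(i)}_{n/2}$ for even $n$, $\Phi^{(i)}_n=-\frac1{\sqrt2}(\lambda^{(i)}_{(n+1)/2}-a_i)^{-1/2}\delta_i\varphi^{(i)}_{(n+1)/2}$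 for odd $n$, $\Phi_n=\Phi^{(1)}_{n_1}\otimes\cdots\otimes\Phi^{(d)}_{n_d}$ for $n\in\mathbb{N}^d$, with the convention $\Phi_n\equiv0$ if $n\in\mathbb{Z}^d\setminus\mathbb{N}^d$, and $\langle n\rangle_j=\lfloor\frac{n_j+1}2\rfloor$. Let $$D_jf(x)=p_j(x_j)\partial_{x_j}f(x)+q_j(x_j)\tfrac{f(x)+f(\sigma_jx)}{2}+\Big[p_j(x_j)\tfrac{w_j'(x_j)}{w_j(x_j)}+p_j'(x_j)-q_j(x_j)\Big]\tfrac{f(x)-f(\sigma_jx)}{2}$$ ($\sigma_j$ the reflection changing the sign of the $j$th coordinate), and for $\ell\in\mathbb{N}^d$ let $D^\ell=D_1^{\ell_1}\cdots D_d^{\ell_d}$. Then for every $\ell\in\mathbb{N}^d\setminus\{(0,\dots,0)\}$ and $n\in\mathbb{N}^d$, $$D^\ell\Phi_n=(-1)^{|\ell|/2+|(n+1/2)\widetilde{\ell}|}\Big(\prod_{j=1}^d\big(\lambda^{(j)}_{\langle n\rangle_j}-a_j\big)^{\ell_j/2}\Big)\Phi_{n-(-1)^n\widetilde{\ell}},$$ where $|\ell|=\ell_1+\dots+\ell_d$, $\widetilde{\ell}\in\{0,1\}^d$ has $\widetilde{\ell}_j=0$ if $\ell_j$ is even and $\widetilde{\ell}_j=1$ if $\ell_j$ is odd, $(-1)^n\widetilde{\ell}=((-1)^{n_1}\widetilde{\ell}_1,\dots,(-1)^{n_d}\widetilde{\ell}_d)$ and $|(n+1/2)\widetilde{\ell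}|=\sum_{j=1}^d(n_j+1/2)\widetilde{\ell}_j$.
   Context: $\mathbb{N}=\{0,1,2,\dots\}$; $\lfloor\cdot\rfloor$ is the floor function. The exponent $|\ell|/2+|(n+1/2)\widetilde\ell|$ is always an integer. *)

theory Defs
  imports "HOL-Analysis.Analysis"
begin

text \<open>Index conventions: coordinates and factors are indexed by j in {0..<d}
  (the paper uses 1..d). Points of the d-dimensional set are functions nat => real,
  only the components j < d matter.\<close>

definition Xset :: "ereal \<Rightarrow> real set" where
  "Xset c = {x. 0 < x \<and> ereal x < c}"

definition Xsym :: "ereal \<Rightarrow> real set" where
  "Xsym c = {x. x \<noteq> 0 \<and> ereal \<bar>x\<bar> < c}"

definition Ck_on :: "nat \<Rightarrow> real set \<Rightarrow> (real \<Rightarrow> real) \<Rightarrow> bool" where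
  "Ck_on k S f \<longleftrightarrow>
     (\<forall>m<k. \<forall>x\<in>S. ((deriv ^^ m) f) differentiable (at x)) \<and> continuous_on S ((deriv ^^ k) f)"

definition Cinf_on :: "real set \<Rightarrow> (real \<Rightarrow> real) \<Rightarrow> bool" where
  "Cinf_on S f \<longleftrightarrow> (\<forall>k. Ck_on k S f)"

definition mu :: "real set \<Rightarrow> (real \<Rightarrow> real) \<Rightarrow> real measure" where
  "mu S w = density (restrict_space lborel S) (\<lambda>x. ennreal (w x))"

definition memL2 :: "real measure \<Rightarrow> (real \<Rightarrow> real) \<Rightarrow> bool" where
  "memL2 M f \<longleftrightarrow> f \<in> borel_measurable M \<and> integrable M (\<lambda>x. (f x)\<^sup>2)"

definition ipL2 :: "real measure \<Rightarrow> (real \<Rightarrow> real) \<Rightarrow> (real \<Rightarrow> real) \<Rightarrow> real" where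
  "ipL2 M f g = (\<integral>x. f x * g x \<partial>M)"

definition orthonormal_basis_L2 :: "real measure \<Rightarrow> (nat \<Rightarrow> real \<Rightarrow> real) \<Rightarrow> bool" where
  "orthonormal_basis_L2 M \<phi> \<longleftrightarrow>
     (\<forall>k. memL2 M (\<phi> k)) \<and>
     (\<forall>k m. ipL2 M (\<phi> k) (\<phi> m) = (if k = m then 1 else 0)) \<and>
     (\<forall>f. memL2 M f \<and> (\<forall>k. ipL2 M f (\<phi> k) = 0) \<longrightarrow> (AE x in M. f x = 0))"

definition even_ext :: "(real \<Rightarrow> real) \<Rightarrow> real \<Rightarrow> real" where
  "even_ext f x = f \<bar>x\<bar>"

definition odd_ext :: "(real \<Rightarrow> real) \<Rightarrow> real \<Rightarrow> real" where
  "odd_ext f x = sgn x * f \<bar>x\<bar>"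

definition delta :: "(real \<Rightarrow> real) \<Rightarrow> (real \<Rightarrow> real) \<Rightarrow> (real \<Rightarrow> real) \<Rightarrow> real \<Rightarrow> real" where
  "delta p q f x = p x * deriv f x + q x * f x"

definition delta_star :: "(real \<Rightarrow> real) \<Rightarrow> (real \<Rightarrow> real) \<Rightarrow> (real \<Rightarrow> real) \<Rightarrow> (real \<Rightarrow> real) \<Rightarrow> real \<Rightarrow> real" where
  "delta_star w p q g x =
     - p x * deriv g x + q x * g x - p x * (deriv w x / w x) * g x - deriv p x * g x"

definition Phi1 :: "real \<Rightarrow> (nat \<Rightarrow> real) \<Rightarrow> (real \<Rightarrow> real) \<Rightarrow> (real \<Rightarrow> real)
                    \<Rightarrow> (nat \<Rightarrow> real \<Rightarrow> real) \<Rightarrow> nat \<Rightarrow> real \<Rightarrow> real" where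
  "Phi1 a lam p q \<phi> n x =
     (if even n then (1 / sqrt 2) * even_ext (\<phi> (n div 2)) x
      else - (1 / sqrt 2) * (lam ((n + 1) div 2) - a) powr (- 1 / 2)
             * delta (even_ext p) (odd_ext q) (even_ext (\<phi> ((n + 1) div 2))) x)"

definition PhiZ :: "nat \<Rightarrow> (nat \<Rightarrow> real) \<Rightarrow> (nat \<Rightarrow> nat \<Rightarrow> real) \<Rightarrow> (nat \<Rightarrow> real \<Rightarrow> real)
                    \<Rightarrow> (nat \<Rightarrow> real \<Rightarrow> real) \<Rightarrow> (nat \<Rightarrow> nat \<Rightarrow> real \<Rightarrow> real)
                    \<Rightarrow> (nat \<Rightarrow> int) \<Rightarrow> (nat \<Rightarrow> real) \<Rightarrow> real" where
  "PhiZ d a lam p q \<phi> m x =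
     (if \<forall>j<d. 0 \<le> m j
      then \<Prod>j<d. Phi1 (a j) (lam j) (p j) (q j) (\<phi> j) (nat (m j)) (x j)
      else 0)"

definition refl :: "nat \<Rightarrow> (nat \<Rightarrow> real) \<Rightarrow> nat \<Rightarrow> real" where
  "refl j x = x(j := - x j)"

definition Dop :: "(nat \<Rightarrow> real \<Rightarrow> real) \<Rightarrow> (nat \<Rightarrow> real \<Rightarrow> real) \<Rightarrow> (nat \<Rightarrow> real \<Rightarrow> real)
                   \<Rightarrow> nat \<Rightarrow> ((nat \<Rightarrow> real) \<Rightarrow> real) \<Rightarrow> (nat \<Rightarrow> real) \<Rightarrow> real" where
  "Dop w p q j f x =
     (let pe = even_ext (p j); we = even_ext (w j); qe = odd_ext (q j); t = x j in
        pe t * deriv (\<lambda>s. f (x(j := s))) t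
        + qe t * ((f x + f (refl j x)) / 2)
        + (pe t * (deriv we t / we t) + deriv pe t - qe t) * ((f x - f (refl j x)) / 2))"

definition Dpow :: "nat \<Rightarrow> (nat \<Rightarrow> real \<Rightarrow> real) \<Rightarrow> (nat \<Rightarrow> real \<Rightarrow> real) \<Rightarrow> (nat \<Rightarrow> real \<Rightarrow> real)
                    \<Rightarrow> (nat \<Rightarrow> nat) \<Rightarrow> ((nat \<Rightarrow> real) \<Rightarrow> real) \<Rightarrow> (nat \<Rightarrow> real) \<Rightarrow> real" where
  "Dpow d w p q l f = foldr (\<lambda>j g. (Dop w p q j ^^ l j) g) [0..<d] f"

definition tilde :: "(nat \<Rightarrow> nat) \<Rightarrow> nat \<Rightarrow> nat" where
  "tilde l j = (if even (l j) then 0 else 1)"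

end

theory Submission
  imports Defs
begin

(* On X_SYM the function Phi_m has parity (-1)^m, and on the right half-line it equals phi_k / sqrt 2
   for m = 2k and a multiple of delta phi_k for m = 2k - 1.  On a function of fixed parity the
   reflection terms of D_j collapse, so in the j-th variable D_j acts as delta on even and as
   -delta^* on odd functions.  Combined with delta^* delta phi_k = (lambda_k - a) phi_k and
   delta phi_0 = 0 (as a = lambda_0, integration by parts gives |delta phi_0|^2 = 0) this yields
   D_j Phi_m = -(-1)^m sqrt (lambda_<m> - a) Phi_(m - (-1)^m), where m - (-1)^m has the same
   <.>-value as m.  Since D_j only sees the j-th tensor factor, D^l Phi_n is obtained by iterating
   this two-periodic rule in each factor separately. *)

lemma Xsym_iff: "t \<in> Xsym c \<longleftrightarrow> t \<noteq> 0 \<and> \<bar>t\<bar> \<in> Xset c"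
  by (auto simp: Xsym_def Xset_def)

lemma uminus_in_Xsym [simp]: "- t \<in> Xsym c \<longleftrightarrow> t \<in> Xsym c"
  by (simp add: Xsym_def)

lemma open_Xset: "open (Xset c)"
proof -
  have "Xset c = {0<..} \<inter> ereal -` {..<c}"
    by (auto simp: Xset_def)
  moreover have "open (ereal -` {..<c})"
    by (rule open_vimage) (auto intro: continuous_intros)
  ultimately show ?thesis by auto
qed

lemma open_Xsym: "open (Xsym c)"
proof -
  have "Xsym c = - {0} \<inter> (\<lambda>x. ereal \<bar>x\<bar>) -` {..<c}"
    by (auto simp: Xsym_def)
  moreover have "open ((\<lambda>x::real. ereal \<bar>x\<bar>) -` {..<c})"
    by (rule open_vimage) (auto intro!: continuous_intros)
  ultimately show ?thesis by auto
qed

lemma Ck_on_differentiable: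
  "Ck_on k S f \<Longrightarrow> m < k \<Longrightarrow> y \<in> S \<Longrightarrow> (deriv ^^ m) f differentiable at y"
  by (simp add: Ck_on_def)

lemma differentiable_at_cong_ev:
  fixes f g :: "real \<Rightarrow> real"
  assumes "\<forall>\<^sub>F s in nhds t. f s = g s" and "g differentiable at t"
  shows "f differentiable at t"
proof -
  have "DERIV g t :> deriv g t"
    using assms(2) by (simp add: DERIV_deriv_iff_real_differentiable)
  then have "DERIV f t :> deriv g t"
    using DERIV_cong_ev[OF refl assms(1) refl] by simp
  then show ?thesis
    by (auto simp: real_differentiable_def)
qed

lemma DERIV_mirror_deriv:
  fixes f :: "real \<Rightarrow> real"
  assumes "f differentiable at (- t)"
  shows "DERIV (\<lambda>s. f (- s)) t :> - deriv f (- t)"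
proof -
  have "DERIV f (- t) :> deriv f (- t)"
    using assms by (simp add: DERIV_deriv_iff_real_differentiable)
  then show ?thesis
    by (simp add: DERIV_mirror)
qed

lemma eventually_nhds_pos: "t > 0 \<Longrightarrow> \<forall>\<^sub>F s in nhds t. (0::real) < s"
  using eventually_nhds_in_open[of "{0<..}" t] by simp

lemma eventually_nhds_neg: "t < 0 \<Longrightarrow> \<forall>\<^sub>F s in nhds t. s < (0::real)"
  using eventually_nhds_in_open[of "{..<0}" t] by simp

lemma even_ext_eventually_pos: "t > 0 \<Longrightarrow> \<forall>\<^sub>F s in nhds t. even_ext f s = f s"
  by (rule eventually_mono[OF eventually_nhds_pos]) (auto simp: even_ext_def)

lemma even_ext_eventually_neg: "t < 0 \<Longrightarrow> \<forall>\<^sub>F s in nhds t. even_ext f s = f (- s)"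
  by (rule eventually_mono[OF eventually_nhds_neg]) (auto simp: even_ext_def)

lemma deriv_even_ext_pos: "t > 0 \<Longrightarrow> deriv (even_ext f) t = deriv f t"
  by (rule deriv_cong_ev[OF even_ext_eventually_pos refl])

lemma deriv_even_ext_neg:
  assumes "t < 0" and "f differentiable at (- t)"
  shows "deriv (even_ext f) t = - deriv f (- t)"
proof -
  have "deriv (even_ext f) t = deriv (\<lambda>s. f (- s)) t"
    by (rule deriv_cong_ev[OF even_ext_eventually_neg[OF assms(1)] refl])
  also have "\<dots> = - deriv f (- t)"
    by (rule DERIV_imp_deriv[OF DERIV_mirror_deriv[OF assms(2)]])
  finally show ?thesis .
qed

section \<open>The one-variable reflection operator\<close>

definition dunkl1 ::
    "(real \<Rightarrow> real) \<Rightarrow> (real \<Rightarrow> real) \<Rightarrow> (real \<Rightarrow> real) \<Rightarrow> (real \<Rightarrow> real) \<Rightarrow> real \<Rightarrow> real"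
  where
  "dunkl1 w p q g t =
     (let pe = even_ext p; we = even_ext w; qe = odd_ext q in
        pe t * deriv g t + qe t * ((g t + g (- t)) / 2)
        + (pe t * (deriv we t / we t) + deriv pe t - qe t) * ((g t - g (- t)) / 2))"

lemma Dop_eq_dunkl1: "Dop w p q j f x = dunkl1 (w j) (p j) (q j) (\<lambda>s. f (x(j := s))) (x j)"
  by (simp add: Dop_def dunkl1_def refl_def Let_def)

lemma dunkl1_cong:
  assumes "\<forall>\<^sub>F s in nhds t. f s = g s" and "f (- t) = g (- t)"
  shows "dunkl1 w p q f t = dunkl1 w p q g t"
  using assms deriv_cong_ev[OF assms(1) refl] eventually_nhds_x_imp_x[OF assms(1)]
  by (simp add: dunkl1_def)

lemma dunkl1_cmult:
  "g differentiable at t \<Longrightarrow> dunkl1 w p q (\<lambda>s. k * g s) t = k * dunkl1 w p q g t"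
  by (simp add: dunkl1_def Let_def deriv_cmult DERIV_deriv_iff_real_differentiable[symmetric]
      DERIV_deriv_iff_field_differentiable algebra_simps add_divide_distrib diff_divide_distrib)

(* On a function of parity (-1)^m agreeing with h on the right half-line, dunkl1 acts as delta
   (m even) or as -delta^* (m odd). *)
definition dunkl1_half :: "nat \<Rightarrow> (real \<Rightarrow> real) \<Rightarrow> (real \<Rightarrow> real) \<Rightarrow> (real \<Rightarrow> real)
    \<Rightarrow> (real \<Rightarrow> real) \<Rightarrow> real \<Rightarrow> real"
  where
  "dunkl1_half m w p q h u = (if even m then delta p q h u else - delta_star w p q h u)"

lemma dunkl1_right:
  assumes t: "t > 0" and "\<forall>\<^sub>F s in nhds t. f s = h s" and "f (- t) = (-1) ^ m * h t"
  shows "dunkl1 w p q f t = dunkl1_half m w p q h t"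
proof -
  have "f t = h t" "deriv f t = deriv h t"
    using eventually_nhds_x_imp_x[OF assms(2)] deriv_cong_ev[OF assms(2) refl] by simp_all
  moreover have "even_ext p t = p t" "even_ext w t = w t" "odd_ext q t = q t"
    using t by (auto simp: even_ext_def odd_ext_def)
  ultimately show ?thesis
    using assms(3) t
    by (auto simp: dunkl1_def dunkl1_half_def delta_def delta_star_def deriv_even_ext_pos
        algebra_simps add_divide_distrib diff_divide_distrib)
qed

lemma dunkl1_left:
  assumes t: "t < 0" and f: "\<forall>\<^sub>F s in nhds t. f s = (-1) ^ m * h (- s)" and "f (- t) = h (- t)"
    and h: "h differentiable at (- t)"
    and "p differentiable at (- t)" and "w differentiable at (- t)"
  shows "dunkl1 w p q f t = (-1) ^ Suc m * dunkl1_half m w p q h (- t)"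
proof -
  have "f t = (-1) ^ m * h (- t)"
    using f eventually_nhds_x_imp_x by blast
  moreover have "deriv f t = (-1) ^ Suc m * deriv h (- t)"
  proof -
    have "DERIV (\<lambda>s. (-1) ^ m * h (- s)) t :> (-1) ^ m * - deriv h (- t)"
      by (rule DERIV_cmult[OF DERIV_mirror_deriv[OF h]])
    then show ?thesis
      using deriv_cong_ev[OF f refl] by (simp add: DERIV_imp_deriv)
  qed
  moreover have "even_ext p t = p (- t)" "even_ext w t = w (- t)" "odd_ext q t = - q (- t)"
    using t by (auto simp: even_ext_def odd_ext_def)
  ultimately show ?thesis
    using assms
    by (auto simp: dunkl1_def dunkl1_half_def delta_def delta_star_def deriv_even_ext_neg
        algebra_simps add_divide_distrib diff_divide_distrib)
qed

lemma delta_cmult: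
  "h differentiable at u \<Longrightarrow> delta p q (\<lambda>x. k * h x) u = k * delta p q h u"
  by (simp add: delta_def deriv_cmult DERIV_deriv_iff_real_differentiable[symmetric]
      DERIV_deriv_iff_field_differentiable algebra_simps)

lemma delta_star_cmult:
  "h differentiable at u \<Longrightarrow> delta_star w p q (\<lambda>x. k * h x) u = k * delta_star w p q h u"
  by (simp add: delta_star_def deriv_cmult DERIV_deriv_iff_real_differentiable[symmetric]
      DERIV_deriv_iff_field_differentiable algebra_simps)

lemma powr_minus_half: "0 \<le> x \<Longrightarrow> x powr (- 1 / 2) = 1 / sqrt x"
  by (simp add: powr_minus_divide powr_half_sqrt)

definition zero_ext :: "(nat \<Rightarrow> 'a \<Rightarrow> real) \<Rightarrow> int \<Rightarrow> 'a \<Rightarrow> real" where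
  "zero_ext F m x = (if m < 0 then 0 else F (nat m) x)"

(* D_j maps Phi_m to a multiple of Phi_(flip_index m). *)
definition flip_index :: "nat \<Rightarrow> int" where
  "flip_index m = int m - (-1) ^ m"

lemma flip_index_neg_iff: "flip_index m < 0 \<longleftrightarrow> m = 0"
  by (cases "even m") (auto simp: flip_index_def odd_pos elim!: evenE)

lemma flip_index_involution:
  assumes "m \<noteq> 0"
  defines "m' \<equiv> nat (flip_index m)"
  shows "flip_index m' = int m" and "(m' + 1) div 2 = (m + 1) div 2" and "even m' \<longleftrightarrow> odd m"
proof -
  have "m' = (if even m then m - 1 else m + 1)"
    using assms by (auto simp: m'_def flip_index_def)
  then show "flip_index m' = int m" "(m' + 1) div 2 = (m + 1) div 2" "even m' \<longleftrightarrow> odd m"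
    using assms by (auto simp: flip_index_def elim!: evenE oddE)
qed

(* D_j^r Phi_m = iterate_coeff a lam r m * Phi_(iterate_index r m): each application of D_j to an
   even index contributes a factor -1, and iterate_sign counts these factors modulo 2. *)
definition iterate_index :: "nat \<Rightarrow> nat \<Rightarrow> int" where
  "iterate_index r m = (if even r then int m else flip_index m)"

definition iterate_sign :: "nat \<Rightarrow> nat \<Rightarrow> nat" where
  "iterate_sign r m = (if even r then r div 2 else (r + 1) div 2 + m)"

definition iterate_coeff :: "real \<Rightarrow> (nat \<Rightarrow> real) \<Rightarrow> nat \<Rightarrow> nat \<Rightarrow> real" where
  "iterate_coeff a lam r m = (-1) ^ iterate_sign r m * sqrt (lam ((m + 1) div 2) - a) ^ r"

lemma iterate_index_0 [simp]: "iterate_index 0 m = int m"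
  by (simp add: iterate_index_def)

lemma iterate_coeff_0 [simp]: "iterate_coeff a lam 0 m = 1"
  by (simp add: iterate_coeff_def iterate_sign_def)

locale spectral_data =
  fixes c :: ereal and w p q :: "real \<Rightarrow> real" and a :: real and lam :: "nat \<Rightarrow> real"
    and \<phi> :: "nat \<Rightarrow> real \<Rightarrow> real"
  assumes w_pos: "\<And>y. y \<in> Xset c \<Longrightarrow> w y > 0"
    and w_diff: "\<And>y. y \<in> Xset c \<Longrightarrow> w differentiable at y"
    and p_diff: "\<And>y. y \<in> Xset c \<Longrightarrow> p differentiable at y"
    and q_diff: "\<And>y. y \<in> Xset c \<Longrightarrow> q differentiable at y"
    and phi_diff: "\<And>k y. y \<in> Xset c \<Longrightarrow> \<phi> k differentiable at y"
    and phi_diff2: "\<And>k y. y \<in> Xset c \<Longrightarrow> deriv (\<phi> k) differentiable at y"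
    and eigen: "\<And>k y. y \<in> Xset c \<Longrightarrow>
        a * \<phi> k y + delta_star w p q (delta p q (\<phi> k)) y = lam k * \<phi> k y"
    and lam_strict_mono: "strict_mono lam"
    and a_eq: "a = lam 0"
    and ground_state: "\<And>y. y \<in> Xset c \<Longrightarrow> delta p q (\<phi> 0) y = 0"
begin

lemma lam_ge_a: "lam k - a \<ge> 0"
  using a_eq lam_strict_mono by (simp add: strict_mono_less_eq)

lemma lam_gt_a: "k \<noteq> 0 \<Longrightarrow> lam k - a > 0"
  using a_eq lam_strict_mono by (simp add: strict_mono_less)

lemma delta_phi_differentiable: "y \<in> Xset c \<Longrightarrow> delta p q (\<phi> k) differentiable at y"
proof -
  assume y: "y \<in> Xset c"
  have "delta p q (\<phi> k) = (\<lambda>x. p x * deriv (\<phi> k) x + q x * \<phi> k x)"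
    by (simp add: delta_def fun_eq_iff)
  then show ?thesis
    using p_diff[OF y] q_diff[OF y] phi_diff[OF y] phi_diff2[OF y] by (auto intro!: derivative_intros)
qed

definition Phi_right :: "nat \<Rightarrow> real \<Rightarrow> real" where
  "Phi_right m = (if even m then (\<lambda>u. (1 / sqrt 2) * \<phi> (m div 2) u)
     else (\<lambda>u. - 1 / (sqrt 2 * sqrt (lam ((m + 1) div 2) - a)) * delta p q (\<phi> ((m + 1) div 2)) u))"

lemma Phi_right_differentiable: "y \<in> Xset c \<Longrightarrow> Phi_right m differentiable at y"
  using phi_diff delta_phi_differentiable lam_gt_a[of "Suc (m div 2)"]
  by (auto simp: Phi_right_def intro!: derivative_intros)

lemma Phi1_eventually_right:
  assumes "t > 0"
  shows "\<forall>\<^sub>F s in nhds t. Phi1 a lam p q \<phi> m s = Phi_right m s"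
  using eventually_nhds_pos[OF assms]
proof (rule eventually_mono)
  fix s :: real assume s: "s > 0"
  have "delta (even_ext p) (odd_ext q) (even_ext (\<phi> k)) s = delta p q (\<phi> k) s" for k
    using s by (simp add: delta_def deriv_even_ext_pos even_ext_def odd_ext_def)
  then show "Phi1 a lam p q \<phi> m s = Phi_right m s"
    using s unfolding Phi1_def powr_minus_half[OF lam_ge_a] by (simp add: Phi_right_def even_ext_def)
qed

lemma Phi1_eventually_left:
  assumes "t < 0" and "t \<in> Xsym c"
  shows "\<forall>\<^sub>F s in nhds t. Phi1 a lam p q \<phi> m s = (-1) ^ m * Phi_right m (- s)"
  using eventually_conj[OF eventually_nhds_neg[OF assms(1)] eventually_nhds_in_open[OF open_Xsym assms(2)]]
proof (rule eventually_mono)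
  fix s :: real assume s: "s < 0 \<and> s \<in> Xsym c"
  then have "- s \<in> Xset c" by (auto simp: Xsym_iff)
  then have "delta (even_ext p) (odd_ext q) (even_ext (\<phi> k)) s = - delta p q (\<phi> k) (- s)" for k
    using s phi_diff by (simp add: delta_def deriv_even_ext_neg even_ext_def odd_ext_def)
  then show "Phi1 a lam p q \<phi> m s = (-1) ^ m * Phi_right m (- s)"
    using s unfolding Phi1_def powr_minus_half[OF lam_ge_a] by (simp add: Phi_right_def even_ext_def)
qed

lemma delta_star_delta_phi: "y \<in> Xset c \<Longrightarrow> delta_star w p q (delta p q (\<phi> k)) y = (lam k - a) * \<phi> k y"
  using eigen[of y k] by (simp add: algebra_simps)

lemma dunkl1_half_Phi_right:
  assumes u: "u \<in> Xset c"
  shows "dunkl1_half m w p q (Phi_right m) u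
    = (-1) ^ Suc m * sqrt (lam ((m + 1) div 2) - a) * zero_ext Phi_right (flip_index m) u"
proof (cases "even m")
  case True
  then obtain k where m: "m = 2 * k" by blast
  have "Phi_right m = (\<lambda>u. (1 / sqrt 2) * \<phi> k u)"
    by (simp add: Phi_right_def m)
  then have lhs: "dunkl1_half m w p q (Phi_right m) u = (1 / sqrt 2) * delta p q (\<phi> k) u"
    using True delta_cmult[OF phi_diff[OF u], where k = "1 / sqrt 2"] by (simp add: dunkl1_half_def)
  show ?thesis
  proof (cases "k = 0")
    case True
    then show ?thesis
      using lhs ground_state[OF u] a_eq by (simp add: m)
  next
    case False
    define m' where "m' = 2 * k - 1"
    have "\<not> flip_index m < 0" and "nat (flip_index m) = m'" and "odd m'" and "(m' + 1) div 2 = k"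
      using False by (auto simp: flip_index_def m m'_def)
    then have "zero_ext Phi_right (flip_index m) u
        = - 1 / (sqrt 2 * sqrt (lam k - a)) * delta p q (\<phi> k) u"
      by (simp add: zero_ext_def Phi_right_def)
    then show ?thesis
      using lhs lam_gt_a[OF False] by (simp add: m)
  qed
next
  case False
  then obtain k where m: "m = 2 * k + 1" by (blast elim: oddE)
  define j where "j = k + 1"
  have L: "lam j - a > 0" and mj: "(m + 1) div 2 = j"
    using lam_gt_a[of j] by (simp_all add: j_def m)
  have "Phi_right m = (\<lambda>u. (- 1 / (sqrt 2 * sqrt (lam j - a))) * delta p q (\<phi> j) u)"
    by (simp add: Phi_right_def m j_def)
  then have "dunkl1_half m w p q (Phi_right m) u
      = 1 / (sqrt 2 * sqrt (lam j - a)) * ((lam j - a) * \<phi> j u)"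
    using False delta_star_cmult[OF delta_phi_differentiable[OF u], where k = "- 1 / (sqrt 2 * sqrt (lam j - a))"]
      delta_star_delta_phi[OF u]
    by (simp add: dunkl1_half_def)
  also have "\<dots> = (lam j - a) / sqrt (lam j - a) * ((1 / sqrt 2) * \<phi> j u)"
    by (simp add: divide_inverse mult_ac)
  also have "\<dots> = sqrt (lam j - a) * ((1 / sqrt 2) * \<phi> j u)"
    using L by (simp add: real_div_sqrt)
  also have "(1 / sqrt 2) * \<phi> j u = zero_ext Phi_right (flip_index m) u"
  proof -
    have "\<not> flip_index m < 0" and "nat (flip_index m) = 2 * j"
      by (simp_all add: flip_index_def m j_def)
    then show ?thesis
      by (simp add: zero_ext_def Phi_right_def)
  qed
  finally show ?thesis
    unfolding mj using False by simp
qed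

abbreviation Phi :: "nat \<Rightarrow> real \<Rightarrow> real" where
  "Phi \<equiv> Phi1 a lam p q \<phi>"

lemma zero_ext_Phi_right: "t > 0 \<Longrightarrow> zero_ext Phi M t = zero_ext Phi_right M t"
  using eventually_nhds_x_imp_x[OF Phi1_eventually_right] by (simp add: zero_ext_def)

lemma zero_ext_Phi_left:
  "t < 0 \<Longrightarrow> t \<in> Xsym c \<Longrightarrow> zero_ext Phi M t = (-1) ^ nat M * zero_ext Phi_right M (- t)"
  using eventually_nhds_x_imp_x[OF Phi1_eventually_left] by (simp add: zero_ext_def)

lemma Phi_differentiable:
  assumes t: "t \<in> Xsym c"
  shows "Phi m differentiable at t"
proof (cases "t > 0")
  case True
  then show ?thesis
    using t by (intro differentiable_at_cong_ev[OF Phi1_eventually_right Phi_right_differentiable])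
      (simp_all add: Xsym_iff)
next
  case False
  then have neg: "t < 0" and tX: "- t \<in> Xset c"
    using t by (auto simp: Xsym_iff)
  have "(\<lambda>s. Phi_right m (- s)) differentiable at t"
    using DERIV_mirror_deriv[OF Phi_right_differentiable[OF tX]] by (auto simp: real_differentiable_def)
  then show ?thesis
    by (intro differentiable_at_cong_ev[OF Phi1_eventually_left[OF neg t]]) simp
qed

lemma dunkl1_Phi:
  assumes t: "t \<in> Xsym c"
  shows "dunkl1 w p q (Phi m) t
    = (-1) ^ Suc m * sqrt (lam ((m + 1) div 2) - a) * zero_ext Phi (flip_index m) t"
proof (cases "t > 0")
  case True
  then have tX: "t \<in> Xset c"
    using t by (simp add: Xsym_iff)
  have "Phi m (- t) = (-1) ^ m * Phi_right m t"
    using eventually_nhds_x_imp_x[OF Phi1_eventually_left[of "- t"]] True t by simp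
  then have "dunkl1 w p q (Phi m) t = dunkl1_half m w p q (Phi_right m) t"
    by (rule dunkl1_right[OF True Phi1_eventually_right[OF True]])
  then show ?thesis
    by (simp add: dunkl1_half_Phi_right[OF tX] zero_ext_Phi_right[OF True])
next
  case False
  then have neg: "t < 0" and tX: "- t \<in> Xset c"
    using t by (auto simp: Xsym_iff)
  have "Phi m (- t) = Phi_right m (- t)"
    using eventually_nhds_x_imp_x[OF Phi1_eventually_right[of "- t"]] neg by simp
  then have "dunkl1 w p q (Phi m) t = (-1) ^ Suc m * dunkl1_half m w p q (Phi_right m) (- t)"
    using dunkl1_left[OF neg Phi1_eventually_left[OF neg t]] Phi_right_differentiable[OF tX]
      p_diff[OF tX] w_diff[OF tX] by simp
  also have "\<dots> = sqrt (lam ((m + 1) div 2) - a) * zero_ext Phi_right (flip_index m) (- t)"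
    by (simp add: dunkl1_half_Phi_right[OF tX])
  also have "\<dots> = (-1) ^ Suc m * sqrt (lam ((m + 1) div 2) - a) * zero_ext Phi (flip_index m) t"
  proof (cases "m = 0")
    case True
    then show ?thesis
      by (simp add: zero_ext_def flip_index_def)
  next
    case False
    then have "even (nat (flip_index m)) \<longleftrightarrow> odd m"
      by (rule flip_index_involution(3))
    then show ?thesis
      by (simp add: zero_ext_Phi_left[OF neg t] minus_one_power_iff)
  qed
  finally show ?thesis .
qed

lemma dunkl1_iterate_step:
  assumes t: "t \<in> Xsym c"
  shows "iterate_coeff a lam r m * dunkl1 w p q (zero_ext Phi (iterate_index r m)) t
    = iterate_coeff a lam (Suc r) m * zero_ext Phi (iterate_index (Suc r) m) t"
proof (cases "even r")
  case True
  have "zero_ext Phi (iterate_index r m) = Phi m"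
    using True by (simp add: iterate_index_def zero_ext_def fun_eq_iff)
  moreover have "iterate_sign (Suc r) m = iterate_sign r m + Suc m"
    using True by (auto simp: iterate_sign_def elim!: evenE)
  ultimately show ?thesis
    using True by (simp add: dunkl1_Phi[OF t] iterate_coeff_def iterate_index_def power_add)
next
  case False
  show ?thesis
  proof (cases "m = 0")
    case True
    have "zero_ext Phi (iterate_index r m) = (\<lambda>_. 0)"
      using False True by (simp add: iterate_index_def zero_ext_def flip_index_def fun_eq_iff)
    moreover have "iterate_coeff a lam (Suc r) m = 0"
      unfolding iterate_coeff_def using True a_eq by simp
    ultimately show ?thesis
      by (simp add: dunkl1_def)
  next
    case m: False
    define m' where "m' = nat (flip_index m)"
    have "zero_ext Phi (iterate_index r m) = Phi m'"
      using False m by (simp add: iterate_index_def zero_ext_def m'_def flip_index_neg_iff fun_eq_iff)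
    moreover have "iterate_sign r m = iterate_sign (Suc r) m + m"
      using False by (auto simp: iterate_sign_def elim!: oddE)
    moreover have "even m' \<longleftrightarrow> odd m"
      using flip_index_involution(3)[OF m] by (simp add: m'_def)
    ultimately show ?thesis
      using False flip_index_involution(1,2)[OF m]
      by (simp add: dunkl1_Phi[OF t] iterate_coeff_def iterate_index_def m'_def[symmetric]
          zero_ext_def power_add minus_one_power_iff)
  qed
qed

end

lemma continuous_ipL2_self_eq_0_imp_zero:
  assumes S: "open S" and w_pos: "\<forall>y\<in>S. w y > 0" and w_cont: "continuous_on S w"
    and g_cont: "continuous_on S g" and g_L2: "memL2 (mu S w) g"
    and g_norm: "ipL2 (mu S w) g g = 0" and t: "t \<in> S"
  shows "g t = 0"
proof (rule ccontr)
  assume gt: "g t \<noteq> 0"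
  have "integral\<^sup>L (mu S w) (\<lambda>x. (g x)\<^sup>2) = 0"
    using g_norm by (simp add: ipL2_def power2_eq_square)
  then have g_ae: "AE x in mu S w. g x = 0"
    using integral_nonneg_eq_0_iff_AE[of "mu S w" "\<lambda>x. (g x)\<^sup>2"] g_L2 by (simp add: memL2_def)
  have "w \<in> borel_measurable (restrict_space lborel S)"
    using borel_measurable_continuous_on_restrict[OF w_cont]
    by (simp add: measurable_def space_restrict_space sets_restrict_space)
  then have w_meas: "(\<lambda>x. ennreal (w x)) \<in> borel_measurable (restrict_space lborel S)"
    by simp
  have "AE x in restrict_space lborel S. 0 < ennreal (w x) \<longrightarrow> g x = 0"
    using g_ae unfolding mu_def by (simp add: AE_density[OF w_meas])
  then have "AE x in lborel. x \<in> S \<longrightarrow> g x = 0"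
    using AE_restrict_space_iff[of S lborel] S w_pos by auto
  then obtain N where N: "{x. \<not> (x \<in> S \<longrightarrow> g x = 0)} \<subseteq> N" "N \<in> null_sets lborel"
    by (auto elim!: AE_E simp: null_sets_def)
  have "isCont g t"
    using g_cont S t by (simp add: continuous_on_eq_continuous_at)
  then obtain e1 where "e1 > 0" "\<forall>y. dist t y < e1 \<longrightarrow> g y \<noteq> 0"
    using continuous_at_avoid gt by blast
  moreover obtain e2 where "e2 > 0" "ball t e2 \<subseteq> S"
    using S t openE by blast
  ultimately obtain e where "e > 0" and e: "{t - e <..< t + e} \<subseteq> {x \<in> S. g x \<noteq> 0}"
    by (intro that[of "min e1 e2"]) (auto simp: dist_real_def subset_iff)
  then have "{t - e <..< t + e} \<in> null_sets lborel"
    using N(1) by (intro null_sets_subset[OF N(2)]) auto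
  moreover have "emeasure lborel {t - e <..< t + e} = ennreal (2 * e)"
    using \<open>e > 0\<close> by simp
  ultimately show False
    using \<open>e > 0\<close> by (simp add: null_sets_def)
qed

lemma delta_eq_0_if_delta_star_delta_eq_0:
  assumes S: "open S" and w_pos: "\<forall>y\<in>S. w y > 0" and w_cont: "continuous_on S w"
    and g_cont: "continuous_on S (delta p q f)" and g_L2: "memL2 (mu S w) (delta p q f)"
    and ibp: "ipL2 (mu S w) (delta p q f) (delta p q f)
      = ipL2 (mu S w) (delta_star w p q (delta p q f)) f"
    and annihilated: "\<forall>y\<in>S. delta_star w p q (delta p q f) y = 0"
    and y: "y \<in> S"
  shows "delta p q f y = 0"
proof (rule continuous_ipL2_self_eq_0_imp_zero[OF S w_pos w_cont g_cont g_L2 _ y])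
  have "space (mu S w) = S"
    by (simp add: mu_def space_restrict_space)
  then have "ipL2 (mu S w) (delta_star w p q (delta p q f)) f = (\<integral>x. 0 \<partial>mu S w)"
    unfolding ipL2_def using annihilated by (intro Bochner_Integration.integral_cong) auto
  then show "ipL2 (mu S w) (delta p q f) (delta p q f) = 0"
    using ibp by simp
qed

lemma spectral_dataI:
  assumes w: "Ck_on 2 (Xset c) w" "\<forall>y\<in>Xset c. w y > 0"
    and p: "Ck_on 2 (Xset c) p" and q: "Ck_on 1 (Xset c) q"
    and \<phi>: "\<forall>k. Cinf_on (Xset c) (\<phi> k)"
    and eigen: "\<forall>k. \<forall>y\<in>Xset c. a * \<phi> k y + delta_star w p q (delta p q (\<phi> k)) y = lam k * \<phi> k y"
    and lam: "strict_mono lam" and a: "a = lam 0"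
    and L2: "memL2 (mu (Xset c) w) (delta p q (\<phi> 0))"
    and ibp: "ipL2 (mu (Xset c) w) (delta p q (\<phi> 0)) (delta p q (\<phi> 0))
      = ipL2 (mu (Xset c) w) (delta_star w p q (delta p q (\<phi> 0))) (\<phi> 0)"
  shows "spectral_data c w p q a lam \<phi>"
proof -
  have \<phi>2: "Ck_on 2 (Xset c) (\<phi> k)" for k
    using \<phi> by (simp add: Cinf_on_def)
  have w_diff: "w differentiable at y" and p_diff: "p differentiable at y"
    and q_diff: "q differentiable at y" and phi_diff: "\<phi> k differentiable at y"
    and phi_diff2: "deriv (\<phi> k) differentiable at y" if "y \<in> Xset c" for y k
    using Ck_on_differentiable[OF w(1), of 0] Ck_on_differentiable[OF p, of 0]
      Ck_on_differentiable[OF q, of 0] Ck_on_differentiable[OF \<phi>2, of 0]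
      Ck_on_differentiable[OF \<phi>2, of 1] that
    by simp_all
  have "delta p q (\<phi> 0) y = 0" if y: "y \<in> Xset c" for y
  proof (rule delta_eq_0_if_delta_star_delta_eq_0[OF open_Xset w(2) _ _ L2 ibp _ y])
    show "continuous_on (Xset c) w"
      using w_diff by (intro continuous_at_imp_continuous_on) (auto intro: differentiable_imp_continuous_within)
    have "delta p q (\<phi> 0) = (\<lambda>x. p x * deriv (\<phi> 0) x + q x * \<phi> 0 x)"
      by (simp add: delta_def fun_eq_iff)
    then show "continuous_on (Xset c) (delta p q (\<phi> 0))"
      using p_diff q_diff phi_diff phi_diff2
      by (intro continuous_at_imp_continuous_on ballI) (auto intro!: continuous_intros differentiable_imp_continuous_within)
    show "\<forall>y\<in>Xset c. delta_star w p q (delta p q (\<phi> 0)) y = 0"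
      using eigen a by (metis add_cancel_right_right)
  qed
  then show ?thesis
    using w_diff p_diff q_diff phi_diff phi_diff2 w(2) eigen lam a by unfold_locales auto
qed

section \<open>Tensor products\<close>

definition Xsym_cube :: "nat \<Rightarrow> ereal \<Rightarrow> (nat \<Rightarrow> real) set" where
  "Xsym_cube d c = {x. \<forall>j<d. x j \<in> Xsym c}"

lemma Dop_cong:
  assumes j: "j < d" and fg: "\<forall>y\<in>Xsym_cube d c. f y = g y" and x: "x \<in> Xsym_cube d c"
  shows "Dop w p q j f x = Dop w p q j g x"
  unfolding Dop_eq_dunkl1
proof (rule dunkl1_cong)
  have slice: "x(j := s) \<in> Xsym_cube d c" if "s \<in> Xsym c" for s
    using x that by (simp add: Xsym_cube_def)
  have "x j \<in> Xsym c"
    using x j by (simp add: Xsym_cube_def)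
  then show "\<forall>\<^sub>F s in nhds (x j). f (x(j := s)) = g (x(j := s))"
    by (rule eventually_mono[OF eventually_nhds_in_open[OF open_Xsym]]) (use fg slice in blast)
  show "f (x(j := - x j)) = g (x(j := - x j))"
    using fg slice \<open>x j \<in> Xsym c\<close> by simp
qed

lemma prod_lessThan_fun_upd:
  fixes d :: nat
  assumes j: "j < d"
  shows "(\<Prod>k<d. G k ((x(j := s)) k)) = G j s * (\<Prod>k\<in>{..<d} - {j}. G k (x k))"
proof -
  have "(\<Prod>k<d. G k ((x(j := s)) k)) = G j s * (\<Prod>k\<in>{..<d} - {j}. G k ((x(j := s)) k))"
    by (subst prod.remove[of "{..<d}" j]) (use j in auto)
  also have "(\<Prod>k\<in>{..<d} - {j}. G k ((x(j := s)) k)) = (\<Prod>k\<in>{..<d} - {j}. G k (x k))"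
    by (rule prod.cong) auto
  finally show ?thesis .
qed

lemma Dop_prod:
  assumes j: "j < d" and G: "G j differentiable at (x j)"
  shows "Dop w p q j (\<lambda>y. C * (\<Prod>k<d. G k (y k))) x
    = C * (\<Prod>k\<in>{..<d} - {j}. G k (x k)) * dunkl1 (w j) (p j) (q j) (G j) (x j)"
proof -
  have "(\<lambda>s. C * (\<Prod>k<d. G k ((x(j := s)) k))) = (\<lambda>s. (C * (\<Prod>k\<in>{..<d} - {j}. G k (x k))) * G j s)"
    unfolding prod_lessThan_fun_upd[OF j] by (simp add: mult_ac)
  then show ?thesis
    by (simp add: Dop_eq_dunkl1 dunkl1_cmult[OF G])
qed

locale spectral_family =
  fixes d :: nat and c :: ereal and w p q :: "nat \<Rightarrow> real \<Rightarrow> real" and a :: "nat \<Rightarrow> real"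
    and lam :: "nat \<Rightarrow> nat \<Rightarrow> real" and \<phi> :: "nat \<Rightarrow> nat \<Rightarrow> real \<Rightarrow> real"
  assumes spectral: "j < d \<Longrightarrow> spectral_data c (w j) (p j) (q j) (a j) (lam j) (\<phi> j)"
begin

abbreviation Phi_int :: "nat \<Rightarrow> int \<Rightarrow> real \<Rightarrow> real" where
  "Phi_int j \<equiv> zero_ext (Phi1 (a j) (lam j) (p j) (q j) (\<phi> j))"

abbreviation coeff :: "nat \<Rightarrow> nat \<Rightarrow> nat \<Rightarrow> real" where
  "coeff j \<equiv> iterate_coeff (a j) (lam j)"

abbreviation Phi_tensor :: "(nat \<Rightarrow> int) \<Rightarrow> (nat \<Rightarrow> real) \<Rightarrow> real" where
  "Phi_tensor M x \<equiv> \<Prod>k<d. Phi_int k (M k) (x k)"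

lemma Phi_int_differentiable: "j < d \<Longrightarrow> t \<in> Xsym c \<Longrightarrow> Phi_int j M differentiable at t"
  using spectral_data.Phi_differentiable[OF spectral]
  by (cases "M < 0") (simp_all add: zero_ext_def[abs_def])

lemma Dop_power_tensor:
  assumes j: "j < d" and f: "\<forall>x\<in>Xsym_cube d c. f x = C * Phi_tensor M x"
    and Mj: "M j = int m"
  shows "\<forall>x\<in>Xsym_cube d c. (Dop w p q j ^^ r) f x
    = C * coeff j r m * Phi_tensor (M(j := iterate_index r m)) x"
proof (induction r)
  case 0
  have "M(j := iterate_index 0 m) = M"
    using Mj by auto
  then show ?case
    using f by simp
next
  case (Suc r)
  show ?case
  proof
    fix x assume x: "x \<in> Xsym_cube d c"
    then have xj: "x j \<in> Xsym c"
      using j by (simp add: Xsym_cube_def)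
    define R where "R = (\<Prod>k\<in>{..<d} - {j}. Phi_int k (M k) (x k))"
    have R: "(\<Prod>k\<in>{..<d} - {j}. Phi_int k ((M(j := i)) k) (x k)) = R" for i
      unfolding R_def by (rule prod.cong) auto
    have "(Dop w p q j ^^ Suc r) f x
        = Dop w p q j (\<lambda>y. (C * coeff j r m) * Phi_tensor (M(j := iterate_index r m)) y) x"
      using Dop_cong[OF j Suc.IH x] by simp
    also have "\<dots> = C * R * (coeff j r m * dunkl1 (w j) (p j) (q j) (Phi_int j (iterate_index r m)) (x j))"
      using Dop_prod[where G = "\<lambda>k. Phi_int k ((M(j := iterate_index r m)) k)" and C = "C * coeff j r m", OF j]
        Phi_int_differentiable[OF j xj] R
      by (simp add: mult_ac)
    also have "\<dots> = C * R * (coeff j (Suc r) m * Phi_int j (iterate_index (Suc r) m) (x j))"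
      using spectral_data.dunkl1_iterate_step[OF spectral[OF j] xj] by simp
    also have "\<dots> = C * coeff j (Suc r) m * Phi_tensor (M(j := iterate_index (Suc r) m)) x"
      using prod_lessThan_fun_upd[OF j, of "\<lambda>k. Phi_int k ((M(j := iterate_index (Suc r) m)) k)" x "x j"] R
      by (simp add: mult_ac)
    finally show "(Dop w p q j ^^ Suc r) f x
        = C * coeff j (Suc r) m * Phi_tensor (M(j := iterate_index (Suc r) m)) x" .
  qed
qed

lemma foldr_Dop_power_tensor:
  assumes "distinct js" and "set js \<subseteq> {..<d}"
  shows "\<forall>x\<in>Xsym_cube d c.
    foldr (\<lambda>j g. (Dop w p q j ^^ l j) g) js (Phi_tensor (\<lambda>k. int (n k))) x
      = (\<Prod>j\<in>set js. coeff j (l j) (n j))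
        * Phi_tensor (\<lambda>k. if k \<in> set js then iterate_index (l k) (n k) else int (n k)) x"
  using assms
proof (induction js)
  case Nil
  then show ?case by simp
next
  case (Cons j js)
  then have j: "j < d" and j_new: "j \<notin> set js" and IH: "\<forall>x\<in>Xsym_cube d c.
      foldr (\<lambda>j g. (Dop w p q j ^^ l j) g) js (Phi_tensor (\<lambda>k. int (n k))) x
      = (\<Prod>j\<in>set js. coeff j (l j) (n j))
        * Phi_tensor (\<lambda>k. if k \<in> set js then iterate_index (l k) (n k) else int (n k)) x"
    by auto
  have upd: "(\<lambda>k. if k \<in> set js then iterate_index (l k) (n k) else int (n k))(j := iterate_index (l j) (n j))
      = (\<lambda>k. if k \<in> set (j # js) then iterate_index (l k) (n k) else int (n k))"
    by (auto simp: fun_eq_iff)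
  show ?case
    using Dop_power_tensor[OF j IH, of "n j" "l j"] j_new unfolding upd by (simp add: mult_ac)
qed

lemma Dpow_tensor:
  assumes "x \<in> Xsym_cube d c"
  shows "Dpow d w p q l (Phi_tensor (\<lambda>k. int (n k))) x
    = (\<Prod>j<d. coeff j (l j) (n j)) * Phi_tensor (\<lambda>k. iterate_index (l k) (n k)) x"
proof -
  have "set [0..<d] = {..<d}" by auto
  then show ?thesis
    using foldr_Dop_power_tensor[of "[0..<d]" l n] assms by (simp add: Dpow_def)
qed

lemma PhiZ_eq_Phi_tensor: "PhiZ d a lam p q \<phi> M = Phi_tensor M"
proof
  fix y
  show "PhiZ d a lam p q \<phi> M y = Phi_tensor M y"
  proof (cases "\<forall>j<d. 0 \<le> M j")
    case True
    then show ?thesis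
      by (auto simp: PhiZ_def zero_ext_def intro!: prod.cong)
  next
    case False
    then obtain k where "k < d" "M k < 0" by auto
    then show ?thesis
      using False by (auto simp: PhiZ_def zero_ext_def intro!: prod_zero)
  qed
qed

end

lemma iterate_index_tilde: "iterate_index (l j) m = int m - (-1) ^ m * int (tilde l j)"
  by (simp add: iterate_index_def flip_index_def tilde_def)

lemma real_iterate_sign: "real (iterate_sign (l j) m) = real (l j) / 2 + (real m + 1 / 2) * real (tilde l j)"
  by (cases "even (l j)") (auto simp: iterate_sign_def tilde_def field_simps elim!: evenE oddE)

lemma prod_iterate_coeff:
  "(\<Prod>j<d. iterate_coeff (a j) (lam j) (l j) (n j))
    = (-1) ^ nat \<lfloor>real (\<Sum>j<d. l j) / 2 + (\<Sum>j<d. (real (n j) + 1 / 2) * real (tilde l j))\<rfloor>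
      * (\<Prod>j<d. sqrt (lam j ((n j + 1) div 2) - a j) ^ l j)"
proof -
  have "real (\<Sum>j<d. iterate_sign (l j) (n j))
      = real (\<Sum>j<d. l j) / 2 + (\<Sum>j<d. (real (n j) + 1 / 2) * real (tilde l j))"
    by (simp add: real_iterate_sign sum.distrib sum_divide_distrib)
  then have "(\<Sum>j<d. iterate_sign (l j) (n j))
      = nat \<lfloor>real (\<Sum>j<d. l j) / 2 + (\<Sum>j<d. (real (n j) + 1 / 2) * real (tilde l j))\<rfloor>"
    by (metis floor_of_nat nat_int)
  then show ?thesis
    by (simp add: iterate_coeff_def prod.distrib power_sum[symmetric])
qed

theorem mainTheorem6:
  fixes d :: nat and c :: ereal
    and w p q :: "nat \<Rightarrow> real \<Rightarrow> real" and a :: "nat \<Rightarrow> real"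
    and \<phi> :: "nat \<Rightarrow> nat \<Rightarrow> real \<Rightarrow> real" and lam :: "nat \<Rightarrow> nat \<Rightarrow> real"
    and l n :: "nat \<Rightarrow> nat" and x :: "nat \<Rightarrow> real"
  assumes d: "d \<ge> 1"
    and c: "c > 0"
    and w: "\<forall>i<d. Ck_on 2 (Xset c) (w i) \<and> (\<forall>y\<in>Xset c. w i y > 0)"
    and p: "\<forall>i<d. Ck_on 2 (Xset c) (p i) \<and> (\<forall>y\<in>Xset c. p i y \<noteq> 0)"
    and q: "\<forall>i<d. Ck_on 1 (Xset c) (q i)"
    and a_nonneg: "\<forall>i<d. a i \<ge> 0"
    and onb: "\<forall>i<d. orthonormal_basis_L2 (mu (Xset c) (w i)) (\<phi> i)"
    and smooth: "\<forall>i<d. \<forall>k. Cinf_on (Xset c) (\<phi> i k)"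
    and eigen: "\<forall>i<d. \<forall>k. \<forall>y\<in>Xset c.
        a i * \<phi> i k y + delta_star (w i) (p i) (q i) (delta (p i) (q i) (\<phi> i k)) y
          = lam i k * \<phi> i k y"
    and lam_mono: "\<forall>i<d. strict_mono (lam i) \<and> filterlim (lam i) at_top sequentially"
    and delta_L2: "\<forall>i<d. \<forall>k. memL2 (mu (Xset c) (w i)) (delta (p i) (q i) (\<phi> i k))"
    and ibp: "\<forall>i<d. \<forall>k m.
        ipL2 (mu (Xset c) (w i)) (delta (p i) (q i) (\<phi> i k)) (delta (p i) (q i) (\<phi> i m))
          = ipL2 (mu (Xset c) (w i)) (delta_star (w i) (p i) (q i) (delta (p i) (q i) (\<phi> i k))) (\<phi> i m)"
    and a_eq: "\<forall>i<d. a i = lam i 0"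
    and l_ne: "\<exists>j<d. l j \<noteq> 0"
    and x: "\<forall>j<d. x j \<in> Xsym c"
  shows "Dpow d w p q l (PhiZ d a lam p q \<phi> (\<lambda>j. int (n j))) x
     = (-1::real) ^ nat \<lfloor>real (\<Sum>j<d. l j) / 2 + (\<Sum>j<d. (real (n j) + 1 / 2) * real (tilde l j))\<rfloor>
       * (\<Prod>j<d. sqrt (lam j ((n j + 1) div 2) - a j) ^ l j)
       * PhiZ d a lam p q \<phi> (\<lambda>j. int (n j) - (-1) ^ (n j) * int (tilde l j)) x"
proof -
  have "spectral_data c (w j) (p j) (q j) (a j) (lam j) (\<phi> j)" if "j < d" for j
    using that w p q smooth eigen lam_mono delta_L2 ibp a_eq by (intro spectral_dataI) auto
  then interpret spectral_family d c w p q a lam \<phi>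
    by (rule spectral_family.intro)
  have "Dpow d w p q l (PhiZ d a lam p q \<phi> (\<lambda>j. int (n j))) x
      = (\<Prod>j<d. coeff j (l j) (n j)) * Phi_tensor (\<lambda>k. iterate_index (l k) (n k)) x"
    using Dpow_tensor[of x l n] x by (simp add: PhiZ_eq_Phi_tensor Xsym_cube_def)
  also have "Phi_tensor (\<lambda>k. iterate_index (l k) (n k)) x
      = PhiZ d a lam p q \<phi> (\<lambda>j. int (n j) - (-1) ^ (n j) * int (tilde l j)) x"
    by (simp add: PhiZ_eq_Phi_tensor iterate_index_tilde)
  finally show ?thesis
    by (simp add: prod_iterate_coeff)
qed

end
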